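(* Let $Y$ be a topological space such that $\mathrm{H}_1([0,1],Y)\subseteq \mathrm{B}_1([0,1],Y)$. Then $Y$ is almost arcwise connected.
   Context: $\mathrm{H}_1(X,Y)$: mappings $f:X\to Y$ with $f^{-1}(V)$ an $F_\sigma$-set for every open $V\subseteq Y$. $\mathrm{B}_1(X,Y)$: pointwise limits of sequences of continuous mappings $X\to Y$. A space $Y$ is almost arcwise connected if for each pair of nonempty open sets $U,V\subseteq Y$ there is a continuous $\gamma:[0,1]\to Y$ with $\gamma(0)\in U$ and $\gamma(1)\in V$ (an arc in $Y$ joining $U$ and $V$). *)

theory Defs
  imports "HOL-Analysis.Analysis"
begin

text \<open>Maps are represented as functions real => 'a; only values on [0,1] matter.\<close>

definition H1_unit :: "(real \<Rightarrow> 'a::topological_space) set" where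
  "H1_unit = {f. \<forall>V. open V \<longrightarrow>
      fsigma_in (top_of_set {0..1}) {x \<in> {0..1}. f x \<in> V}}"

definition B1_unit :: "(real \<Rightarrow> 'a::topological_space) set" where
  "B1_unit = {f. \<exists>g :: nat \<Rightarrow> real \<Rightarrow> 'a.
      (\<forall>n. continuous_on {0..1} (g n)) \<and>
      (\<forall>x \<in> {0..1}. (\<lambda>n. g n x) \<longlonglongrightarrow> f x)}"

definition almost_arcwise_connected :: "'a::topological_space itself \<Rightarrow> bool" where
  "almost_arcwise_connected _ \<longleftrightarrow>
     (\<forall>U V :: 'a set. open U \<and> U \<noteq> {} \<and> open V \<and> V \<noteq> {} \<longrightarrow>
        (\<exists>\<gamma>. continuous_on {0..1::real} \<gamma> \<and> \<gamma> 0 \<in> U \<and> \<gamma> 1 \<in> V))"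

end

theory Submission
  imports Defs
begin

text \<open>Pick \<open>u \<in> U\<close> and \<open>v \<in> V\<close>. The step map equal to \<open>u\<close> on \<open>[0,1/2)\<close> and to \<open>v\<close> on
  \<open>[1/2,1]\<close> has \<open>F\<^sub>\<sigma>\<close> preimages, so by hypothesis it is a pointwise limit of continuous
  maps \<open>g\<^sub>n\<close>. For large \<open>n\<close> the endpoints \<open>g\<^sub>n 0\<close> and \<open>g\<^sub>n 1\<close> lie in \<open>U\<close> and \<open>V\<close>, so \<open>g\<^sub>n\<close> is
  the required arc.\<close>

lemma two_valued_in_H1_unit:
  fixes u v :: "'a::topological_space"
  assumes "fsigma_in (top_of_set {0..1}) ({0..1} \<inter> S)"
    and "fsigma_in (top_of_set {0..1}) ({0..1} - S)"
  shows "(\<lambda>x::real. if x \<in> S then u else v) \<in> H1_unit"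
  unfolding H1_unit_def
proof (intro CollectI allI impI)
  fix W :: "'a set"
  have preimage: "{x \<in> {0..1}. (if x \<in> S then u else v) \<in> W} =
      (if u \<in> W then {0..1} \<inter> S else {}) \<union> (if v \<in> W then {0..1} - S else {})"
    by auto
  show "fsigma_in (top_of_set {0..1}) {x \<in> {0..1}. (if x \<in> S then u else v) \<in> W}"
    unfolding preimage using assms by (intro fsigma_in_Un) (simp_all add: fsigma_in_empty)
qed

lemma step_in_H1_unit:
  fixes u v :: "'a::topological_space"
  shows "(\<lambda>x::real. if x < 1/2 then u else v) \<in> H1_unit"
proof -
  let ?X = "top_of_set {0..1::real}"
  have "metrizable_space ?X"
    by (simp add: metrizable_space_subtopology metrizable_space_euclidean)
  moreover have "openin ?X ({0..1} \<inter> {..<1/2})"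
    by (simp add: openin_open_Int)
  ultimately have "fsigma_in ?X ({0..1} \<inter> {..<1/2})"
    by (rule open_imp_fsigma_in)
  moreover have "closedin ?X ({0..1} \<inter> {1/2..})"
    by (rule closedin_closed_Int) simp
  then have "fsigma_in ?X ({0..1} \<inter> {1/2..})"
    by (rule closed_imp_fsigma_in)
  moreover have "{0..1} - {..<1/2} = {0..1} \<inter> {1/2::real..}"
    by auto
  ultimately have "(\<lambda>x::real. if x \<in> {..<1/2} then u else v) \<in> H1_unit"
    by (intro two_valued_in_H1_unit) simp_all
  then show ?thesis
    by simp
qed

lemma B1_unit_endpoints_imp_path:
  fixes f :: "real \<Rightarrow> 'a::topological_space"
  assumes "f \<in> B1_unit" "open U" "f 0 \<in> U" "open V" "f 1 \<in> V"
  shows "\<exists>\<gamma>. continuous_on {0..1::real} \<gamma> \<and> \<gamma> 0 \<in> U \<and> \<gamma> 1 \<in> V"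
proof -
  obtain g :: "nat \<Rightarrow> real \<Rightarrow> 'a" where cont: "\<And>n. continuous_on {0..1} (g n)"
    and lim: "\<And>x. x \<in> {0..1} \<Longrightarrow> (\<lambda>n. g n x) \<longlonglongrightarrow> f x"
    using \<open>f \<in> B1_unit\<close> unfolding B1_unit_def by blast
  have "eventually (\<lambda>n. g n 0 \<in> U) sequentially"
    using topological_tendstoD[OF lim] assms(2,3) by simp
  moreover have "eventually (\<lambda>n. g n 1 \<in> V) sequentially"
    using topological_tendstoD[OF lim] assms(4,5) by simp
  ultimately have "eventually (\<lambda>n. g n 0 \<in> U \<and> g n 1 \<in> V) sequentially"
    by (rule eventually_conj)
  then obtain n where "g n 0 \<in> U" "g n 1 \<in> V"
    by (auto simp: eventually_sequentially)
  then show ?thesis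
    using cont by blast
qed

theorem mainTheorem9:
  assumes "(H1_unit :: (real \<Rightarrow> 'a::topological_space) set) \<subseteq> B1_unit"
  shows "almost_arcwise_connected TYPE('a)"
  unfolding almost_arcwise_connected_def
proof (intro allI impI)
  fix U V :: "'a set"
  assume UV: "open U \<and> U \<noteq> {} \<and> open V \<and> V \<noteq> {}"
  then obtain u v where "u \<in> U" "v \<in> V" by blast
  have "(\<lambda>x::real. if x < 1/2 then u else v) \<in> B1_unit"
    using assms step_in_H1_unit by blast
  from B1_unit_endpoints_imp_path[OF this] UV \<open>u \<in> U\<close> \<open>v \<in> V\<close>
  show "\<exists>\<gamma>. continuous_on {0..1::real} \<gamma> \<and> \<gamma> 0 \<in> U \<and> \<gamma> 1 \<in> V"
    by simp
qed

end
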